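(* Let $h=\hat h\circ\tilde h:\Sigma^c\to\mathcal R$ be a random tornado tabulation hash function with $d$ derived characters, query keys $Q$ and selector function $f$. Let $\mathcal I_{X^{f,h}}$ denote the event that the set of derived selected keys $\tilde h(X^{f,h})$ is linearly independent. Then for any $\delta>0$, $$\Pr\left[|X^{f,h}|\ge(1+\delta)\mu^f\ \wedge\ \mathcal I_{X^{f,h}}\right]\le\left(\frac{e^\delta}{(1+\delta)^{1+\delta}}\right)^{\mu^f}.$$
   Context: Let $\Sigma=\{0,1,\dots,2^k-1\}$, identified with $k$-bit strings, $\oplus$ bitwise xor; throughout $|\Sigma|\ge2^8$; $\mathcal R=\{0,\dots,2^r-1\}$. A simple tabulation hash function $g:\Sigma^b\to\mathcal R'$ is $g(x_1\cdots x_b)=T_1[x_1]\oplus\cdots\oplus T_b[x_b]$ with independent fully random tables $T_i:\Sigma\to\mathcal R'$. A random tornado tabulation hash function $h:\Sigma^c\to\mathcal R$ with $d\ge1$ derived characters consists of mutually independent simple tabulation functions $\tilde h_i:\Sigma^{c+i-1}\to\Sigma$ ($i=0,\dots,d$) and $\hat h:\Sigma^{c+d}\to\mathcal R$; the derived key of $x=x_1\cdots x_c$ is $\tilde h(x)=\tilde x_1\cdots\tilde x_{c+d}$ with $\tilde x_i=x_i$ ($i<c$), $\tilde x_c=x_c\oplus\tilde h_0(\tilde x_1\cdots\tilde x_{c-1})$, $\tilde x_i=\tilde h_{i-c}(\tilde x_1\cdots\tilde x_{i-1})$ ($c<i\le c+d$); $h(x)=\hat h(\tilde h(x))$. A selector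 function with query keys $Q\subseteq\Sigma^c$ is $f:\Sigma^c\times\mathcal R\times\mathcal R^Q\to\{0,1\}$ with $f(q,\cdot,\cdot)=1$ for $q\in Q$; $X^{f,h}=\{x\in\Sigma^c: f(x,h(x),h|_Q)=1\}$; $p^f_x=\max_{\varphi\in\mathcal R^Q}\Pr_{r\sim\mathcal U(\mathcal R)}[f(x,r,\varphi)=1]$; $\mu^f=\sum_{x\in\Sigma^c}p^f_x$. A set $Y\subseteq\Sigma^b$ is linearly dependent if some nonempty $Y'\subseteq Y$ has, at every position, every character appearing an even number of times among the keys of $Y'$; otherwise linearly independent. *)

theory Defs
  imports "HOL-Probability.Probability"
begin

text \<open>Characters: Sigma = {0..<2^k} (k-bit strings as naturals, xor = bitwise xor on nat).
 A key in Sigma^b is a list of length b over Sigma.\<close>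

definition keys :: "nat \<Rightarrow> nat \<Rightarrow> nat list set" where
  "keys k b = {xs. length xs = b \<and> set xs \<subseteq> {..<2^k}}"

text \<open>Table family for a simple tabulation function Sigma^b -> {0..<2^v}:
 T j a is the entry of table T_(j+1) at character a (j < b, a < 2^k); zero elsewhere
 (canonical representative, so that the set of tables is finite).\<close>

definition tables :: "nat \<Rightarrow> nat \<Rightarrow> nat \<Rightarrow> (nat \<Rightarrow> nat \<Rightarrow> nat) set" where
  "tables k b v = {T. \<forall>j a. (j < b \<and> a < 2^k \<longrightarrow> T j a < 2^v)
                          \<and> (\<not> (j < b \<and> a < 2^k) \<longrightarrow> T j a = 0)}"

definition stab :: "(nat \<Rightarrow> nat \<Rightarrow> nat) \<Rightarrow> nat list \<Rightarrow> nat" where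
  "stab T xs = fold (\<lambda>j acc. Bit_Operations.xor acc (T j (xs ! j))) [0..<length xs] 0"

text \<open>Tornado tables: Tt i is the table family of h~_i : Sigma^(c+i-1) -> Sigma, i = 0..d.\<close>

definition tornado_tables :: "nat \<Rightarrow> nat \<Rightarrow> nat \<Rightarrow> (nat \<Rightarrow> nat \<Rightarrow> nat \<Rightarrow> nat) set" where
  "tornado_tables k c d = {Tt. (\<forall>i\<le>d. Tt i \<in> tables k (c + i - 1) k)
                              \<and> (\<forall>i>d. Tt i = (\<lambda>_ _. 0))}"

definition derived_base :: "(nat \<Rightarrow> nat \<Rightarrow> nat \<Rightarrow> nat) \<Rightarrow> nat \<Rightarrow> nat list \<Rightarrow> nat list" where
  "derived_base Tt c x = take (c - 1) x @ [Bit_Operations.xor (x ! (c - 1)) (stab (Tt 0) (take (c - 1) x))]"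

fun derived_ext :: "(nat \<Rightarrow> nat \<Rightarrow> nat \<Rightarrow> nat) \<Rightarrow> nat \<Rightarrow> nat list \<Rightarrow> nat list" where
  "derived_ext Tt 0 ys = ys"
| "derived_ext Tt (Suc i) ys = (let zs = derived_ext Tt i ys in zs @ [stab (Tt (Suc i)) zs])"

definition derived_key :: "(nat \<Rightarrow> nat \<Rightarrow> nat \<Rightarrow> nat) \<Rightarrow> nat \<Rightarrow> nat \<Rightarrow> nat list \<Rightarrow> nat list" where
  "derived_key Tt c d x = derived_ext Tt d (derived_base Tt c x)"

definition tornado :: "(nat \<Rightarrow> nat \<Rightarrow> nat \<Rightarrow> nat) \<Rightarrow> (nat \<Rightarrow> nat \<Rightarrow> nat) \<Rightarrow> nat \<Rightarrow> nat \<Rightarrow> nat list \<Rightarrow> nat" where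
  "tornado Tt Th c d x = stab Th (derived_key Tt c d x)"

text \<open>Restriction of h to the query keys, as element of R^Q (canonically 0 outside Q).\<close>

definition restrictQ :: "(nat list \<Rightarrow> nat) \<Rightarrow> nat list set \<Rightarrow> nat list \<Rightarrow> nat" where
  "restrictQ g Q = (\<lambda>q. if q \<in> Q then g q else 0)"

text \<open>R^Q as canonical functions.\<close>

definition RQ :: "nat \<Rightarrow> nat list set \<Rightarrow> (nat list \<Rightarrow> nat) set" where
  "RQ r Q = {\<phi>. (\<forall>q\<in>Q. \<phi> q < 2^r) \<and> (\<forall>q. q \<notin> Q \<longrightarrow> \<phi> q = 0)}"

definition selected ::
  "nat \<Rightarrow> nat \<Rightarrow> nat list set \<Rightarrow> (nat list \<Rightarrow> nat \<Rightarrow> (nat list \<Rightarrow> nat) \<Rightarrow> bool) \<Rightarrow> (nat list \<Rightarrow> nat) \<Rightarrow> nat list set" where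
  "selected k c Q f g = {x \<in> keys k c. f x (g x) (restrictQ g Q)}"

definition p_sel ::
  "nat \<Rightarrow> nat list set \<Rightarrow> (nat list \<Rightarrow> nat \<Rightarrow> (nat list \<Rightarrow> nat) \<Rightarrow> bool) \<Rightarrow> nat list \<Rightarrow> real" where
  "p_sel r Q f x = Max ((\<lambda>\<phi>. measure_pmf.prob (pmf_of_set {..<(2::nat)^r}) {v. f x v \<phi>}) ` RQ r Q)"

definition mu_sel ::
  "nat \<Rightarrow> nat \<Rightarrow> nat \<Rightarrow> nat list set \<Rightarrow> (nat list \<Rightarrow> nat \<Rightarrow> (nat list \<Rightarrow> nat) \<Rightarrow> bool) \<Rightarrow> real" where
  "mu_sel k c r Q f = (\<Sum>x\<in>keys k c. p_sel r Q f x)"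

definition lin_dependent :: "nat \<Rightarrow> nat list set \<Rightarrow> bool" where
  "lin_dependent b Y = (\<exists>Y'. Y' \<subseteq> Y \<and> Y' \<noteq> {} \<and> finite Y' \<and>
       (\<forall>j<b. \<forall>a. even (card {y \<in> Y'. y ! j = a})))"

definition lin_independent :: "nat \<Rightarrow> nat list set \<Rightarrow> bool" where
  "lin_independent b Y = (\<not> lin_dependent b Y)"

end

theory Submission
  imports Defs
begin

text \<open>Fix the tables of the derived-key functions; then the derived-key map \<open>D\<close> is injective and
  only the table \<open>Th\<close> of the final simple tabulation is random. Simple tabulation is linear over
  GF(2), so if \<open>D ` (Z \<union> Q)\<close> is linearly independent, a dual basis shows that the hash values of
  these derived keys are uniform and independent. Query keys are always selected and any other
  key \<open>z\<close> is selected with probability at most \<open>p z\<close> whatever the values on \<open>Q\<close>, hence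
  \<open>Pr[Z \<subseteq> X] \<le> (\<Prod>z\<in>Z. p z)\<close>. The bound then follows as in Chernoff's proof: on the event,
  \<open>(1 + \<delta>) powr ((1 + \<delta>) * \<mu>) \<le> (1 + \<delta>) ^ card X = (\<Sum>Z\<subseteq>X. \<delta> ^ card Z)\<close>, every such \<open>Z\<close>
  inherits independence from \<open>X\<close>, and the expectation of the sum over independent \<open>Z\<close> is at most
  \<open>(\<Prod>x. 1 + \<delta> * p x) \<le> exp (\<delta> * \<mu>)\<close>.\<close>

section \<open>Keys and simple tabulation\<close>

lemma keys_nth_less: "w \<in> keys k b \<Longrightarrow> j < b \<Longrightarrow> w ! j < 2^k"
  unfolding keys_def using nth_mem by fastforce

lemma finite_keys: "finite (keys k b)"
proof -
  have "keys k b = {xs. set xs \<subseteq> {..<2^k} \<and> length xs = b}" unfolding keys_def by auto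
  then show ?thesis using finite_lists_length_eq[of "{..<(2::nat)^k}" b] by simp
qed

lemma xor_less_power2: "(a::nat) < 2^r \<Longrightarrow> b < 2^r \<Longrightarrow> xor a b < 2^r"
  by (metis take_bit_nat_eq_self_iff take_bit_xor)

primrec stab_prefix :: "(nat \<Rightarrow> nat \<Rightarrow> nat) \<Rightarrow> nat list \<Rightarrow> nat \<Rightarrow> nat" where
  "stab_prefix T xs 0 = 0"
| "stab_prefix T xs (Suc n) = xor (stab_prefix T xs n) (T n (xs ! n))"

lemma stab_eq_stab_prefix: "stab T xs = stab_prefix T xs (length xs)"
proof -
  have "fold (\<lambda>j acc. xor acc (T j (xs ! j))) [0..<n] 0 = stab_prefix T xs n" for n
    by (induction n) auto
  then show ?thesis unfolding stab_def .
qed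

lemma stab_less:
  assumes "\<And>j a. T j a < 2^v"
  shows "stab T xs < 2^v"
proof -
  have "stab_prefix T xs n < 2^v" for n
    by (induction n) (auto intro: xor_less_power2 assms)
  then show ?thesis by (simp add: stab_eq_stab_prefix)
qed

lemma stab_zero [simp]: "stab (\<lambda>_ _. 0) xs = 0"
proof -
  have "stab_prefix (\<lambda>_ _. 0) xs n = 0" for n by (induction n) auto
  then show ?thesis by (simp add: stab_eq_stab_prefix)
qed

definition table_xor :: "(nat \<Rightarrow> nat \<Rightarrow> nat) \<Rightarrow> (nat \<Rightarrow> nat \<Rightarrow> nat) \<Rightarrow> nat \<Rightarrow> nat \<Rightarrow> nat" where
  "table_xor T T' = (\<lambda>j a. xor (T j a) (T' j a))"

lemma table_xor_cancel [simp]: "table_xor (table_xor T T') T' = T"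
  by (simp add: table_xor_def xor.assoc)

lemma stab_table_xor: "stab (table_xor T T') xs = xor (stab T xs) (stab T' xs)"
proof -
  have "stab_prefix (table_xor T T') xs n = xor (stab_prefix T xs n) (stab_prefix T' xs n)" for n
    by (induction n) (auto simp: table_xor_def ac_simps)
  then show ?thesis by (simp add: stab_eq_stab_prefix)
qed

lemma stab_parity_table:
  "stab (\<lambda>j a. if odd (T j a) then v else 0) xs = (if odd (\<Sum>j<length xs. T j (xs ! j)) then v else 0)"
proof -
  have "stab_prefix (\<lambda>j a. if odd (T j a) then v else 0) xs n = (if odd (\<Sum>j<n. T j (xs ! j)) then v else 0)" for n
    by (induction n) auto
  then show ?thesis by (simp add: stab_eq_stab_prefix)
qed

lemma tables_less: "T \<in> tables k b v \<Longrightarrow> T j a < 2^v"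
  unfolding tables_def by (cases "j < b \<and> a < 2^k") auto

lemma zero_in_tables: "(\<lambda>_ _. 0) \<in> tables k b v"
  unfolding tables_def by auto

lemma table_xor_in_tables: "T \<in> tables k b v \<Longrightarrow> T' \<in> tables k b v \<Longrightarrow> table_xor T T' \<in> tables k b v"
  unfolding tables_def table_xor_def by (auto intro: xor_less_power2)

lemma finite_tables: "finite (tables k b v)"
proof -
  let ?S = "{g. \<forall>x. (x \<in> {..<b} \<times> {..<(2::nat)^k} \<longrightarrow> g x \<in> {..<(2::nat)^v})
                   \<and> (x \<notin> {..<b} \<times> {..<(2::nat)^k} \<longrightarrow> g x = 0)}"
  have "case_prod ` tables k b v \<subseteq> ?S" unfolding tables_def by auto
  moreover have "finite ?S" by (rule finite_set_of_finite_funs) auto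
  ultimately have "finite (case_prod ` tables k b v)" by (rule finite_subset)
  moreover have "inj_on case_prod (tables k b v)"
    by (rule inj_on_inverseI[of _ curry]) simp
  ultimately show ?thesis by (rule finite_imageD)
qed

section \<open>Linear independence over GF(2)\<close>

text \<open>Keys of \<open>\<Sigma>\<^sup>b\<close> are identified with 0/1 vectors indexed by (position, character);
  a table \<open>T\<close> read modulo 2 is then a GF(2)-linear functional, whose value at \<open>w\<close> is the
  parity of \<open>table_sum b T w\<close>.\<close>

definition table_sum :: "nat \<Rightarrow> (nat \<Rightarrow> nat \<Rightarrow> nat) \<Rightarrow> nat list \<Rightarrow> nat" where
  "table_sum b T w = (\<Sum>j<b. T j (w ! j))"

lemma table_sum_add_sum:
  "finite A \<Longrightarrow> table_sum b (\<lambda>j a. V j a + (\<Sum>i\<in>A. c i * T i j a)) w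
     = table_sum b V w + (\<Sum>i\<in>A. c i * table_sum b (T i) w)"
  unfolding table_sum_def by (simp add: sum.distrib sum_distrib_left sum.swap[of _ A])

lemma table_sum_add_scaled:
  "table_sum b (\<lambda>j a. V j a + c * U j a) w = table_sum b V w + c * table_sum b U w"
  unfolding table_sum_def by (simp add: sum.distrib sum_distrib_left)

lemma table_sum_unit:
  "j0 < b \<Longrightarrow> table_sum b (\<lambda>j a. if j = j0 \<and> a = a0 then 1 else 0) w = (if w ! j0 = a0 then 1 else 0)"
  unfolding table_sum_def by (subst sum.remove[of _ j0]) auto

lemma lin_independent_subset:
  assumes "lin_independent b Y" and "Y' \<subseteq> Y"
  shows "lin_independent b Y'"
proof -
  have "lin_dependent b Y" if "lin_dependent b Y'"
    using that \<open>Y' \<subseteq> Y\<close> unfolding lin_dependent_def by (meson order_trans)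
  then show ?thesis using \<open>lin_independent b Y\<close> unfolding lin_independent_def by blast
qed

lemma parity_table_separating_new_key:
  assumes "finite W" and "w1 \<notin> W" and indep: "lin_independent b (insert w1 W)"
    and dual: "\<And>w0 w. w0 \<in> W \<Longrightarrow> w \<in> W \<Longrightarrow> odd (table_sum b (Tf w0) w) \<longleftrightarrow> w = w0"
  obtains U where "\<And>w. w \<in> W \<Longrightarrow> even (table_sum b U w)" and "odd (table_sum b U w1)"
proof -
  define S where "S = {w0 \<in> W. odd (table_sum b (Tf w0) w1)}"
  have "finite S" "w1 \<notin> S" "insert w1 S \<subseteq> insert w1 W"
    using assms(1,2) by (auto simp: S_def)
  with indep obtain j a where j: "j < b" and odd_count: "odd (card {y \<in> insert w1 S. y ! j = a})"
    unfolding lin_independent_def lin_dependent_def by blast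
  define V where "V = (\<lambda>j' a'. if j' = j \<and> a' = a then 1 else (0::nat))"
  have sum_V: "table_sum b V w = (if w ! j = a then 1 else 0)" for w
    unfolding V_def by (rule table_sum_unit[OF j])
  \<comment> \<open>Correct V by the dual tables so that it becomes even on W; the parity at w1 then counts
    the keys of insert w1 S with character a at position j.\<close>
  define U where "U = (\<lambda>j' a'. V j' a' + (\<Sum>w0\<in>W. table_sum b V w0 * Tf w0 j' a'))"
  have sum_U: "table_sum b U w = table_sum b V w + (\<Sum>w0\<in>W. table_sum b V w0 * table_sum b (Tf w0) w)" for w
    unfolding U_def by (rule table_sum_add_sum[OF \<open>finite W\<close>])
  show thesis
  proof
    fix w assume "w \<in> W"
    then have "{w0 \<in> W. odd (table_sum b V w0 * table_sum b (Tf w0) w)} = (if odd (table_sum b V w) then {w} else {})"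
      using dual[of _ w] by auto
    then show "even (table_sum b U w)"
      unfolding sum_U using \<open>finite W\<close> by (simp add: even_sum_iff)
  next
    have "{w0 \<in> W. odd (table_sum b V w0 * table_sum b (Tf w0) w1)} = {y \<in> S. y ! j = a}"
      unfolding S_def sum_V by auto
    moreover have "{y \<in> insert w1 S. y ! j = a}
        = (if w1 ! j = a then insert w1 {y \<in> S. y ! j = a} else {y \<in> S. y ! j = a})"
      by auto
    ultimately show "odd (table_sum b U w1)"
      using odd_count \<open>finite S\<close> \<open>w1 \<notin> S\<close> \<open>finite W\<close>
      unfolding sum_U by (simp add: even_sum_iff sum_V split: if_splits)
  qed
qed

lemma dual_parity_tables:
  assumes "finite W" and "lin_independent b W"
  shows "\<exists>Tf. \<forall>w0\<in>W. \<forall>w\<in>W. odd (table_sum b (Tf w0) w) \<longleftrightarrow> w = w0"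
  using assms
proof (induction W rule: finite_induct)
  case empty
  show ?case by simp
next
  case (insert w1 W)
  obtain Tf where Tf: "\<And>w0 w. w0 \<in> W \<Longrightarrow> w \<in> W \<Longrightarrow> odd (table_sum b (Tf w0) w) \<longleftrightarrow> w = w0"
    using insert.IH[OF lin_independent_subset[OF insert.prems subset_insertI]] by blast
  obtain U where U_even: "\<And>w. w \<in> W \<Longrightarrow> even (table_sum b U w)" and U_odd: "odd (table_sum b U w1)"
    using parity_table_separating_new_key[OF insert.hyps insert.prems Tf] by blast
  define Tf' where "Tf' w0 = (if w0 = w1 then U else (\<lambda>j a. Tf w0 j a + table_sum b (Tf w0) w1 * U j a))" for w0
  have "odd (table_sum b (Tf' w0) w) \<longleftrightarrow> w = w0" if "w0 \<in> insert w1 W" "w \<in> insert w1 W" for w0 w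
  proof (cases "w0 = w1")
    case True
    then show ?thesis using that U_even U_odd insert.hyps(2) by (auto simp: Tf'_def)
  next
    case False
    then have "w0 \<in> W" using that(1) by simp
    have sum_Tf': "table_sum b (Tf' w0) w = table_sum b (Tf w0) w + table_sum b (Tf w0) w1 * table_sum b U w"
      using False by (simp add: Tf'_def table_sum_add_scaled)
    from that(2) show ?thesis
    proof
      assume "w = w1"
      then show ?thesis unfolding sum_Tf' using U_odd False by simp
    next
      assume "w \<in> W"
      then show ?thesis unfolding sum_Tf' using U_even Tf[OF \<open>w0 \<in> W\<close>] by simp
    qed
  qed
  then show ?case by blast
qed

section \<open>Uniformity of simple tabulation on independent keys\<close>

lemma tables_realize_point_value:
  assumes W: "finite W" "W \<subseteq> keys k b" "lin_independent b W" and "w0 \<in> W" and "v < 2^r"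
  obtains S where "S \<in> tables k b r" and "\<And>w. w \<in> W \<Longrightarrow> stab S w = (if w = w0 then v else 0)"
proof -
  obtain Tf where Tf: "\<And>w. w \<in> W \<Longrightarrow> odd (table_sum b (Tf w0) w) \<longleftrightarrow> w = w0"
    using dual_parity_tables[OF W(1,3)] \<open>w0 \<in> W\<close> by blast
  define S where "S = (\<lambda>j a. if j < b \<and> a < 2^k \<and> odd (Tf w0 j a) then v else 0)"
  show thesis
  proof
    show "S \<in> tables k b r" using \<open>v < 2^r\<close> unfolding tables_def S_def by auto
    fix w assume "w \<in> W"
    then have "w \<in> keys k b" using W(2) by blast
    then have "(\<Sum>j<length w. if j < b \<and> w ! j < 2^k then Tf w0 j (w ! j) else 0) = table_sum b (Tf w0) w"
      unfolding table_sum_def using keys_nth_less[of w k b] by (auto simp: keys_def)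
    moreover have "S = (\<lambda>j a. if odd (if j < b \<and> a < 2^k then Tf w0 j a else 0) then v else 0)"
      unfolding S_def by (auto simp: fun_eq_iff)
    ultimately show "stab S w = (if w = w0 then v else 0)"
      using Tf[OF \<open>w \<in> W\<close>] by (simp add: stab_parity_table)
  qed
qed

lemma tables_realize_values:
  assumes W: "finite W" "W \<subseteq> keys k b" "lin_independent b W"
    and \<psi>: "\<And>w. w \<in> W \<Longrightarrow> \<psi> w < 2^r"
  shows "\<exists>Th\<in>tables k b r. \<forall>w\<in>W. stab Th w = \<psi> w"
proof -
  have "\<exists>Th\<in>tables k b r. \<forall>w\<in>W. stab Th w = (if w \<in> V then \<psi> w else 0)" if "V \<subseteq> W" for V
    using finite_subset[OF that W(1)] that
  proof (induction V rule: finite_induct)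
    case empty
    show ?case by (intro bexI[OF _ zero_in_tables]) simp
  next
    case (insert v V)
    then obtain Th where Th: "Th \<in> tables k b r" "\<And>w. w \<in> W \<Longrightarrow> stab Th w = (if w \<in> V then \<psi> w else 0)"
      by auto
    obtain S where S: "S \<in> tables k b r" "\<And>w. w \<in> W \<Longrightarrow> stab S w = (if w = v then \<psi> v else 0)"
      using tables_realize_point_value[OF W, of v "\<psi> v"] insert.prems \<psi> by auto
    have "stab (table_xor Th S) w = (if w \<in> insert v V then \<psi> w else 0)" if "w \<in> W" for w
      using Th(2)[OF that] S(2)[OF that] insert.hyps(2) by (auto simp: stab_table_xor)
    then show ?case using table_xor_in_tables[OF Th(1) S(1)] by blast
  qed
  from this[of W] show ?thesis by simp
qed

definition tables_with_values ::
  "nat \<Rightarrow> nat \<Rightarrow> nat \<Rightarrow> nat list set \<Rightarrow> (nat list \<Rightarrow> nat) \<Rightarrow> (nat \<Rightarrow> nat \<Rightarrow> nat) set" where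
  "tables_with_values k b r W \<psi> = {Th \<in> tables k b r. \<forall>w\<in>W. stab Th w = \<psi> w}"

lemma card_tables_with_values_eq_zero:
  assumes "finite W" "W \<subseteq> keys k b" "lin_independent b W" and "\<And>w. w \<in> W \<Longrightarrow> \<psi> w < 2^r"
  shows "card (tables_with_values k b r W \<psi>) = card (tables_with_values k b r W (\<lambda>_. 0))"
proof -
  obtain Th0 where Th0: "Th0 \<in> tables k b r" "\<And>w. w \<in> W \<Longrightarrow> stab Th0 w = \<psi> w"
    using tables_realize_values[where \<psi> = \<psi>, OF assms] by blast
  have "bij_betw (\<lambda>Th. table_xor Th Th0) (tables_with_values k b r W (\<lambda>_. 0)) (tables_with_values k b r W \<psi>)"
    by (rule bij_betw_byWitness[where f' = "\<lambda>Th. table_xor Th Th0"])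
      (use Th0 in \<open>auto simp: tables_with_values_def stab_table_xor intro: table_xor_in_tables\<close>)
  then show ?thesis by (simp add: bij_betw_same_card)
qed

lemma card_tables_with_values:
  assumes W: "finite W" "W \<subseteq> keys k b" "lin_independent b W" and "\<And>w. w \<in> W \<Longrightarrow> \<psi> w < 2^r"
  shows "card (tables_with_values k b r W \<psi>) * (2^r)^card W = card (tables k b r)"
proof -
  let ?P = "PiE W (\<lambda>_. {..<(2::nat)^r})"
  let ?fibre = "tables_with_values k b r W"
  have partition: "tables k b r = (\<Union>\<phi>\<in>?P. ?fibre \<phi>)"
  proof (intro equalityI subsetI)
    fix Th assume Th: "Th \<in> tables k b r"
    then have "restrict (stab Th) W \<in> ?P" by (auto intro: stab_less tables_less)
    moreover have "Th \<in> ?fibre (restrict (stab Th) W)"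
      using Th by (simp add: tables_with_values_def)
    ultimately show "Th \<in> (\<Union>\<phi>\<in>?P. ?fibre \<phi>)" by blast
  qed (auto simp: tables_with_values_def)
  have disjoint: "?fibre \<phi> \<inter> ?fibre \<phi>' = {}" if \<phi>: "\<phi> \<in> ?P" "\<phi>' \<in> ?P" "\<phi> \<noteq> \<phi>'" for \<phi> \<phi>'
  proof -
    obtain w where "w \<in> W" "\<phi> w \<noteq> \<phi>' w" using PiE_ext[OF \<phi>(1,2)] \<phi>(3) by blast
    then show ?thesis by (auto simp: tables_with_values_def)
  qed
  have "card (tables k b r) = (\<Sum>\<phi>\<in>?P. card (?fibre \<phi>))"
    unfolding partition
    by (rule card_UN_disjoint) (use W(1) finite_tables disjoint in \<open>auto simp: finite_PiE tables_with_values_def\<close>)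
  also have "\<dots> = (\<Sum>\<phi>\<in>?P. card (?fibre (\<lambda>_. 0)))"
  proof (rule sum.cong)
    fix \<phi> assume "\<phi> \<in> ?P"
    then show "card (?fibre \<phi>) = card (?fibre (\<lambda>_. 0))"
      by (intro card_tables_with_values_eq_zero[OF W]) auto
  qed simp
  also have "\<dots> = card (?fibre \<psi>) * (2^r)^card W"
    using W(1) card_tables_with_values_eq_zero[where \<psi> = \<psi>, OF assms] by (simp add: card_PiE)
  finally show ?thesis by simp
qed

section \<open>Derived keys\<close>

lemma tornado_tables_less: "Tt \<in> tornado_tables k c d \<Longrightarrow> Tt i j a < 2^k"
  unfolding tornado_tables_def by (cases "i \<le> d") (auto intro: tables_less)

lemma zero_in_tornado_tables: "(\<lambda>_ _ _. 0) \<in> tornado_tables k c d"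
  unfolding tornado_tables_def using zero_in_tables by auto

lemma finite_tornado_tables: "finite (tornado_tables k c d)"
proof -
  let ?extend = "\<lambda>g i. if i \<le> d then g i else (\<lambda>_ _. 0)"
  have "tornado_tables k c d \<subseteq> ?extend ` PiE {..d} (\<lambda>i. tables k (c + i - 1) k)"
  proof
    fix Tt assume Tt: "Tt \<in> tornado_tables k c d"
    then have "Tt = ?extend (restrict Tt {..d})"
      unfolding tornado_tables_def by (auto simp: fun_eq_iff)
    moreover have "restrict Tt {..d} \<in> PiE {..d} (\<lambda>i. tables k (c + i - 1) k)"
      using Tt unfolding tornado_tables_def by auto
    ultimately show "Tt \<in> ?extend ` PiE {..d} (\<lambda>i. tables k (c + i - 1) k)"
      by (rule image_eqI)
  qed
  moreover have "finite (PiE {..d} (\<lambda>i. tables k (c + i - 1) k))"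
    by (intro finite_PiE) (auto intro: finite_tables)
  ultimately show ?thesis using finite_subset by blast
qed

lemma length_derived_ext [simp]: "length (derived_ext Tt i ys) = length ys + i"
  by (induction i) (simp_all add: Let_def)

lemma take_derived_ext: "take (length ys) (derived_ext Tt i ys) = ys"
  by (induction i) (simp_all add: Let_def)

lemma derived_ext_in_keys:
  assumes "Tt \<in> tornado_tables k c d" and "ys \<in> keys k n"
  shows "derived_ext Tt i ys \<in> keys k (n + i)"
proof (induction i)
  case 0
  show ?case using assms(2) by simp
next
  case (Suc i)
  have "stab (Tt (Suc i)) zs < 2^k" for zs
    by (rule stab_less) (rule tornado_tables_less[OF assms(1)])
  with Suc show ?case by (simp add: keys_def Let_def)
qed

lemma derived_base_involution:
  assumes "length x = c" and "c \<ge> 1"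
  shows "derived_base Tt c (derived_base Tt c x) = x"
proof -
  have "take (Suc (c - 1)) x = take (c - 1) x @ [x ! (c - 1)]"
    using assms by (intro take_Suc_conv_app_nth) simp
  then have "x = take (c - 1) x @ [x ! (c - 1)]"
    using assms by simp
  then show ?thesis
    unfolding derived_base_def using assms by (simp add: nth_append xor.assoc)
qed

lemma derived_base_in_keys:
  assumes "Tt \<in> tornado_tables k c d" and "c \<ge> 1" and "x \<in> keys k c"
  shows "derived_base Tt c x \<in> keys k c"
proof -
  have "x ! (c - 1) < 2^k" using keys_nth_less[OF assms(3)] assms(2) by simp
  moreover have "stab (Tt 0) (take (c - 1) x) < 2^k"
    by (rule stab_less) (rule tornado_tables_less[OF assms(1)])
  moreover have "set (take (c - 1) x) \<subseteq> {..<2^k}"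
    using assms(3) unfolding keys_def by (auto dest: in_set_takeD)
  ultimately show ?thesis
    using assms(2,3) unfolding derived_base_def keys_def by (auto intro: xor_less_power2)
qed

lemma derived_key_in_keys:
  "Tt \<in> tornado_tables k c d \<Longrightarrow> c \<ge> 1 \<Longrightarrow> x \<in> keys k c \<Longrightarrow> derived_key Tt c d x \<in> keys k (c + d)"
  unfolding derived_key_def by (intro derived_ext_in_keys derived_base_in_keys)

lemma inj_on_derived_key:
  assumes "c \<ge> 1"
  shows "inj_on (derived_key Tt c d) (keys k c)"
proof (rule inj_on_inverseI)
  fix x assume "x \<in> keys k c"
  then have "length (derived_base Tt c x) = c"
    using assms unfolding keys_def derived_base_def by simp
  then have "take c (derived_key Tt c d x) = derived_base Tt c x"
    unfolding derived_key_def by (metis take_derived_ext)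
  then show "derived_base Tt c (take c (derived_key Tt c d x)) = x"
    using \<open>x \<in> keys k c\<close> assms by (simp add: derived_base_involution keys_def)
qed

section \<open>Selection probabilities\<close>

lemma finite_RQ: "finite Q \<Longrightarrow> finite (RQ r Q)"
proof -
  assume Q: "finite Q"
  have "RQ r Q = {g. \<forall>x. (x \<in> Q \<longrightarrow> g x \<in> {..<(2::nat)^r}) \<and> (x \<notin> Q \<longrightarrow> g x = 0)}"
    unfolding RQ_def by auto
  then show ?thesis using finite_set_of_finite_funs[OF Q, of "{..<(2::nat)^r}" 0] by simp
qed

lemma restrictQ_in_RQ: "(\<And>q. q \<in> Q \<Longrightarrow> g q < 2^r) \<Longrightarrow> restrictQ g Q \<in> RQ r Q"
  unfolding restrictQ_def RQ_def by auto

lemma prob_uniform_values: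
  "measure_pmf.prob (pmf_of_set {..<(2::nat)^r}) A = card ({..<(2::nat)^r} \<inter> A) / 2^r"
  by (subst measure_pmf_of_set) (auto simp: lessThan_empty_iff)

lemma card_selecting_values_le_p_sel:
  assumes "finite Q" and "\<phi> \<in> RQ r Q"
  shows "real (card {v \<in> {..<(2::nat)^r}. f x v \<phi>}) \<le> 2^r * p_sel r Q f x"
proof -
  have "measure_pmf.prob (pmf_of_set {..<(2::nat)^r}) {v. f x v \<phi>} \<le> p_sel r Q f x"
    unfolding p_sel_def using assms finite_RQ by (intro Max_ge) auto
  moreover have "{..<(2::nat)^r} \<inter> {v. f x v \<phi>} = {v \<in> {..<2^r}. f x v \<phi>}" by auto
  ultimately show ?thesis unfolding prob_uniform_values by (simp add: field_simps)
qed

lemma p_sel_nonneg: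
  assumes "finite Q"
  shows "0 \<le> p_sel r Q f x"
proof -
  have "(\<lambda>_. 0) \<in> RQ r Q" by (simp add: RQ_def)
  then have "measure_pmf.prob (pmf_of_set {..<(2::nat)^r}) {v. f x v (\<lambda>_. 0)} \<le> p_sel r Q f x"
    unfolding p_sel_def using assms finite_RQ by (intro Max_ge) auto
  then show ?thesis by (rule order_trans[OF measure_nonneg])
qed

lemma p_sel_query:
  assumes "finite Q" and "q \<in> Q" and query: "\<And>q v \<phi>. q \<in> Q \<Longrightarrow> f q v \<phi>"
  shows "p_sel r Q f q = 1"
proof -
  have "RQ r Q \<noteq> {}" by (auto simp: RQ_def intro!: exI[of _ "\<lambda>_. 0"])
  moreover have "measure_pmf.prob (pmf_of_set {..<(2::nat)^r}) {v. f q v \<phi>} = 1" for \<phi>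
    using query[OF \<open>q \<in> Q\<close>] by (simp add: prob_uniform_values)
  ultimately show ?thesis unfolding p_sel_def by (simp add: image_constant_conv)
qed

lemma card_selecting_assignments:
  assumes "finite Q" and "finite Z" and "Q \<inter> Z = {}"
  shows "real (card {\<phi> \<in> PiE (Q \<union> Z) (\<lambda>_. {..<(2::nat)^r}). \<forall>z\<in>Z. f z (\<phi> z) (restrictQ \<phi> Q)})
           \<le> (2^r)^card Q * (\<Prod>z\<in>Z. 2^r * p_sel r Q f z)"
  using assms(2,3)
proof (induction Z rule: finite_induct)
  case empty
  show ?case using \<open>finite Q\<close> by (simp add: card_PiE)
next
  case (insert z0 Z)
  let ?R = "{..<(2::nat)^r}"
  define G where "G = {\<phi> \<in> PiE (Q \<union> Z) (\<lambda>_. ?R). \<forall>z\<in>Z. f z (\<phi> z) (restrictQ \<phi> Q)}"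
  define S where "S = Sigma G (\<lambda>\<phi>. {y \<in> ?R. f z0 y (restrictQ \<phi> Q)})"
  have "z0 \<notin> Q" "z0 \<notin> Z" using insert by auto
  have "finite G" unfolding G_def using \<open>finite Q\<close> insert.hyps(1)
    by (auto intro: finite_subset[OF _ finite_PiE[of "Q \<union> Z" "\<lambda>_. ?R"]])
  have "{\<psi> \<in> PiE (Q \<union> insert z0 Z) (\<lambda>_. ?R). \<forall>z\<in>insert z0 Z. f z (\<psi> z) (restrictQ \<psi> Q)}
        \<subseteq> (\<lambda>(\<phi>, y). \<phi>(z0 := y)) ` S"
  proof
    fix \<psi> assume \<psi>: "\<psi> \<in> {\<psi> \<in> PiE (Q \<union> insert z0 Z) (\<lambda>_. ?R). \<forall>z\<in>insert z0 Z. f z (\<psi> z) (restrictQ \<psi> Q)}"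
    then obtain y \<phi> where "\<psi> = \<phi>(z0 := y)" "y \<in> ?R" "\<phi> \<in> PiE (Q \<union> Z) (\<lambda>_. ?R)"
      using PiE_insert_eq[of z0 "Q \<union> Z" "\<lambda>_. ?R"] by auto
    moreover have "restrictQ \<psi> Q = restrictQ \<phi> Q"
      using \<open>z0 \<notin> Q\<close> \<open>\<psi> = \<phi>(z0 := y)\<close> by (auto simp: restrictQ_def)
    moreover have "\<psi> z = \<phi> z" if "z \<in> Z" for z
      using that \<open>z0 \<notin> Z\<close> \<open>\<psi> = \<phi>(z0 := y)\<close> by auto
    ultimately have "(\<phi>, y) \<in> S"
      using \<psi> \<open>\<psi> = \<phi>(z0 := y)\<close> unfolding S_def G_def by auto
    then show "\<psi> \<in> (\<lambda>(\<phi>, y). \<phi>(z0 := y)) ` S"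
      using \<open>\<psi> = \<phi>(z0 := y)\<close> by (auto intro!: image_eqI[of _ _ "(\<phi>, y)"])
  qed
  then have "real (card {\<psi> \<in> PiE (Q \<union> insert z0 Z) (\<lambda>_. ?R). \<forall>z\<in>insert z0 Z. f z (\<psi> z) (restrictQ \<psi> Q)})
      \<le> card S"
    using \<open>finite G\<close> unfolding S_def by (intro of_nat_mono surj_card_le) auto
  also have "\<dots> = (\<Sum>\<phi>\<in>G. real (card {y \<in> ?R. f z0 y (restrictQ \<phi> Q)}))"
    unfolding S_def using \<open>finite G\<close> by simp
  also have "\<dots> \<le> (\<Sum>\<phi>\<in>G. 2^r * p_sel r Q f z0)"
    by (intro sum_mono card_selecting_values_le_p_sel[OF \<open>finite Q\<close>] restrictQ_in_RQ)
      (auto simp: G_def)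
  also have "\<dots> = real (card G) * (2^r * p_sel r Q f z0)" by simp
  also have "\<dots> \<le> (2^r)^card Q * (\<Prod>z\<in>Z. 2^r * p_sel r Q f z) * (2^r * p_sel r Q f z0)"
    using insert.IH insert.prems p_sel_nonneg[OF \<open>finite Q\<close>] unfolding G_def
    by (intro mult_right_mono) auto
  also have "\<dots> = (2^r)^card Q * (\<Prod>z\<in>insert z0 Z. 2^r * p_sel r Q f z)"
    using insert.hyps by (simp add: ac_simps)
  finally show ?case .
qed

lemma card_tables_selecting_subset:
  assumes inj: "inj_on D (keys k c)" and D_keys: "D ` keys k c \<subseteq> keys k b"
    and "Q \<subseteq> keys k c" and "Z \<subseteq> keys k c" and indep: "lin_independent b (D ` (Z \<union> Q))"
    and query: "\<And>q v \<phi>. q \<in> Q \<Longrightarrow> f q v \<phi>"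
  shows "real (card {Th \<in> tables k b r. Z \<subseteq> selected k c Q f (\<lambda>x. stab Th (D x))})
           \<le> real (card (tables k b r)) * (\<Prod>z\<in>Z. p_sel r Q f z)"
proof -
  let ?R = "{..<(2::nat)^r}"
  define Z' where "Z' = Z - Q"
  define A where "A = Q \<union> Z'"
  define G where "G = {\<phi> \<in> PiE A (\<lambda>_. ?R). \<forall>z\<in>Z'. f z (\<phi> z) (restrictQ \<phi> Q)}"
  define fibre where "fibre \<phi> = tables_with_values k b r (D ` A) (\<lambda>w. \<phi> (inv_into A D w))" for \<phi>
  have "finite Q" "finite Z'" "Q \<inter> Z' = {}"
    using assms(3,4) finite_keys by (auto simp: Z'_def intro: finite_subset)
  have "A \<subseteq> keys k c" using assms(3,4) by (auto simp: A_def Z'_def)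
  then have inj_A: "inj_on D A" using inj by (rule inj_on_subset[rotated])
  have "finite (PiE A (\<lambda>_. ?R))" using \<open>finite Q\<close> \<open>finite Z'\<close> by (simp add: A_def finite_PiE)
  then have "finite G" unfolding G_def by (rule finite_subset[rotated]) auto
  have card_fibre: "real (card (fibre \<phi>)) = card (tables k b r) / (2^r)^card A" if "\<phi> \<in> G" for \<phi>
  proof -
    have "lin_independent b (D ` A)"
      using indep by (rule lin_independent_subset) (auto simp: A_def Z'_def)
    moreover have "finite (D ` A)" "D ` A \<subseteq> keys k b"
      using \<open>finite Q\<close> \<open>finite Z'\<close> \<open>A \<subseteq> keys k c\<close> D_keys by (auto simp: A_def)
    ultimately have "card (fibre \<phi>) * (2^r)^card (D ` A) = card (tables k b r)"
      unfolding fibre_def using that inj_A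
      by (intro card_tables_with_values) (auto simp: G_def PiE_iff inv_into_into)
    then have "real (card (fibre \<phi>) * (2^r)^card A) = card (tables k b r)"
      by (simp add: card_image[OF inj_A])
    then show ?thesis by (simp add: field_simps)
  qed
  have "{Th \<in> tables k b r. Z \<subseteq> selected k c Q f (\<lambda>x. stab Th (D x))} \<subseteq> (\<Union>\<phi>\<in>G. fibre \<phi>)"
  proof
    fix Th assume Th: "Th \<in> {Th \<in> tables k b r. Z \<subseteq> selected k c Q f (\<lambda>x. stab Th (D x))}"
    define \<phi> where "\<phi> = restrict (\<lambda>x. stab Th (D x)) A"
    have "restrictQ \<phi> Q = restrictQ (\<lambda>x. stab Th (D x)) Q"
      by (auto simp: \<phi>_def A_def restrictQ_def)
    then have "\<phi> \<in> G"
      using Th by (auto simp: G_def \<phi>_def A_def Z'_def selected_def intro: stab_less tables_less)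
    moreover have "Th \<in> fibre \<phi>"
      using Th inj_A by (auto simp: fibre_def tables_with_values_def \<phi>_def)
    ultimately show "Th \<in> (\<Union>\<phi>\<in>G. fibre \<phi>)" by blast
  qed
  then have "real (card {Th \<in> tables k b r. Z \<subseteq> selected k c Q f (\<lambda>x. stab Th (D x))})
      \<le> (\<Sum>\<phi>\<in>G. real (card (fibre \<phi>)))"
    using \<open>finite G\<close> finite_tables
    by (intro order_trans[OF _ card_UN_le[OF \<open>finite G\<close>], THEN of_nat_mono, simplified] card_mono)
      (auto simp: fibre_def tables_with_values_def)
  also have "\<dots> = real (card G) * (card (tables k b r) / (2^r)^card A)"
    using card_fibre by simp
  also have "\<dots> \<le> (2^r)^card Q * (\<Prod>z\<in>Z'. 2^r * p_sel r Q f z) * (card (tables k b r) / (2^r)^card A)"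
    using card_selecting_assignments[OF \<open>finite Q\<close> \<open>finite Z'\<close> \<open>Q \<inter> Z' = {}\<close>, of r f]
    unfolding G_def A_def by (intro mult_right_mono) auto
  also have "\<dots> = card (tables k b r) * (\<Prod>z\<in>Z'. p_sel r Q f z)"
    using \<open>finite Q\<close> \<open>finite Z'\<close> \<open>Q \<inter> Z' = {}\<close>
    by (simp add: A_def card_Un_disjoint prod.distrib power_add field_simps)
  also have "(\<Prod>z\<in>Z'. p_sel r Q f z) = (\<Prod>z\<in>Z. p_sel r Q f z)"
    using assms(4) finite_keys \<open>finite Q\<close>
    by (intro prod.mono_neutral_left) (auto simp: Z'_def p_sel_query query intro: finite_subset)
  finally show ?thesis .
qed

section \<open>The Chernoff bound\<close>

lemma chernoff_from_subset_bounds: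
  fixes X :: "'w \<Rightarrow> 'a set" and p :: "'a \<Rightarrow> real" and \<delta> :: real
  assumes "finite \<Omega>" and "finite K" and X_sub: "\<And>\<omega>. \<omega> \<in> \<Omega> \<Longrightarrow> X \<omega> \<subseteq> K"
    and good_subset: "\<And>Y Z. good Y \<Longrightarrow> Z \<subseteq> Y \<Longrightarrow> good Z"
    and subset_bound: "\<And>Z. Z \<subseteq> K \<Longrightarrow> good Z \<Longrightarrow> real (card {\<omega> \<in> \<Omega>. Z \<subseteq> X \<omega>}) \<le> real (card \<Omega>) * (\<Prod>z\<in>Z. p z)"
    and p_nonneg: "\<And>x. x \<in> K \<Longrightarrow> 0 \<le> p x" and "\<delta> > 0"
  shows "real (card {\<omega> \<in> \<Omega>. (1 + \<delta>) * (\<Sum>x\<in>K. p x) \<le> real (card (X \<omega>)) \<and> good (X \<omega>)})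
           \<le> (exp \<delta> / (1 + \<delta>) powr (1 + \<delta>)) powr (\<Sum>x\<in>K. p x) * real (card \<Omega>)"
proof -
  define \<mu> where "\<mu> = (\<Sum>x\<in>K. p x)"
  define L where "L = (1 + \<delta>) powr ((1 + \<delta>) * \<mu>)"
  define E where "E = {\<omega> \<in> \<Omega>. (1 + \<delta>) * \<mu> \<le> real (card (X \<omega>)) \<and> good (X \<omega>)}"
  define goods where "goods = {Z \<in> Pow K. good Z}"
  define moment where "moment \<omega> = (\<Sum>Z\<in>goods. if Z \<subseteq> X \<omega> then \<delta>^card Z else 0)" for \<omega>
  have "L > 0" "\<mu> \<ge> 0" using \<open>\<delta> > 0\<close> p_nonneg by (auto simp: L_def \<mu>_def sum_nonneg)
  have "finite goods" using \<open>finite K\<close> by (simp add: goods_def)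
  have "L \<le> moment \<omega>" if "\<omega> \<in> E" for \<omega>
  proof -
    have "X \<omega> \<subseteq> K" "good (X \<omega>)" using that X_sub by (auto simp: E_def)
    then have "finite (X \<omega>)" "{Z \<in> goods. Z \<subseteq> X \<omega>} = Pow (X \<omega>)"
      using \<open>finite K\<close> good_subset by (auto simp: goods_def intro: finite_subset)
    then have "moment \<omega> = (\<Sum>Z\<in>Pow (X \<omega>). (\<Prod>x\<in>Z. \<delta>) * (\<Prod>x\<in>X \<omega> - Z. 1))"
      unfolding moment_def using \<open>finite goods\<close> by (simp add: sum.inter_filter[symmetric])
    also have "\<dots> = (1 + \<delta>) ^ card (X \<omega>)"
      using prod_add[OF \<open>finite (X \<omega>)\<close>, of "\<lambda>_. \<delta>" "\<lambda>_. 1"] by (simp add: add.commute)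
    finally show ?thesis
      using that \<open>\<delta> > 0\<close> by (simp add: L_def E_def powr_realpow[symmetric] powr_mono)
  qed
  then have "real (card E) * L \<le> (\<Sum>\<omega>\<in>E. moment \<omega>)"
    using sum_mono[of E "\<lambda>_. L" moment] by simp
  also have "\<dots> \<le> (\<Sum>\<omega>\<in>\<Omega>. moment \<omega>)"
    using \<open>finite \<Omega>\<close> \<open>\<delta> > 0\<close> by (intro sum_mono2) (auto simp: E_def moment_def intro: sum_nonneg)
  also have "\<dots> = (\<Sum>Z\<in>goods. \<delta>^card Z * real (card {\<omega> \<in> \<Omega>. Z \<subseteq> X \<omega>}))"
    unfolding moment_def using \<open>finite \<Omega>\<close>
    by (subst sum.swap) (simp add: sum.If_cases Int_def mult.commute)
  also have "\<dots> \<le> (\<Sum>Z\<in>Pow K. \<delta>^card Z * (real (card \<Omega>) * (\<Prod>z\<in>Z. p z)))"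
    using \<open>finite K\<close> \<open>\<delta> > 0\<close> subset_bound p_nonneg
    by (intro order_trans[OF sum_mono sum_mono2])
      (auto simp: goods_def intro!: mult_left_mono prod_nonneg mult_nonneg_nonneg)
  also have "\<dots> = real (card \<Omega>) * (\<Prod>x\<in>K. \<delta> * p x + 1)"
    using prod_add[OF \<open>finite K\<close>, of "\<lambda>x. \<delta> * p x" "\<lambda>_. 1"]
    by (simp add: prod.distrib sum_distrib_left ac_simps)
  also have "\<dots> \<le> real (card \<Omega>) * exp (\<delta> * \<mu>)"
  proof -
    have "(\<Prod>x\<in>K. \<delta> * p x + 1) \<le> (\<Prod>x\<in>K. exp (\<delta> * p x))"
      using \<open>\<delta> > 0\<close> p_nonneg by (intro prod_mono) (auto simp: add.commute[of _ 1] exp_ge_add_one_self)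
    also have "\<dots> = exp (\<delta> * \<mu>)"
      by (simp add: \<mu>_def exp_sum[OF \<open>finite K\<close>] sum_distrib_left)
    finally show ?thesis by (simp add: mult_left_mono)
  qed
  finally have "real (card E) \<le> exp (\<delta> * \<mu>) / L * real (card \<Omega>)"
    using \<open>L > 0\<close> by (simp add: field_simps)
  also have "exp (\<delta> * \<mu>) / L = (exp \<delta> / (1 + \<delta>) powr (1 + \<delta>)) powr \<mu>"
    using \<open>\<delta> > 0\<close> by (simp add: L_def powr_divide powr_powr exp_powr_real flip: exp_of_nat_mult)
  finally show ?thesis by (simp add: E_def \<mu>_def)
qed

lemma card_tables_chernoff:
  assumes inj: "inj_on D (keys k c)" and D_keys: "D ` keys k c \<subseteq> keys k b"
    and "Q \<subseteq> keys k c" and query: "\<And>q v \<phi>. q \<in> Q \<Longrightarrow> f q v \<phi>" and "\<delta> > 0"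
  shows "real (card {Th \<in> tables k b r.
             (1 + \<delta>) * mu_sel k c r Q f \<le> real (card (selected k c Q f (\<lambda>x. stab Th (D x))))
           \<and> lin_independent b (D ` selected k c Q f (\<lambda>x. stab Th (D x)))})
         \<le> (exp \<delta> / (1 + \<delta>) powr (1 + \<delta>)) powr mu_sel k c r Q f * real (card (tables k b r))"
proof -
  let ?X = "\<lambda>Th. selected k c Q f (\<lambda>x. stab Th (D x))"
  define good where "good Z = lin_independent b (D ` (Z \<union> Q))" for Z
  have "finite Q" using \<open>Q \<subseteq> keys k c\<close> finite_keys by (rule finite_subset)
  have "real (card {Th \<in> tables k b r. (1 + \<delta>) * mu_sel k c r Q f \<le> real (card (?X Th)) \<and> good (?X Th)})
      \<le> (exp \<delta> / (1 + \<delta>) powr (1 + \<delta>)) powr mu_sel k c r Q f * real (card (tables k b r))"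
    unfolding mu_sel_def
  proof (rule chernoff_from_subset_bounds[where good = good and X = ?X and p = "p_sel r Q f"])
    show "finite (tables k b r)" "finite (keys k c)" by (rule finite_tables finite_keys)+
    show "?X Th \<subseteq> keys k c" for Th by (auto simp: selected_def)
    show "good Z" if "good Y" "Z \<subseteq> Y" for Y Z
      using lin_independent_subset[OF that(1)[unfolded good_def]] that(2)
      unfolding good_def by (meson Un_mono image_mono order_refl)
    show "real (card {Th \<in> tables k b r. Z \<subseteq> ?X Th}) \<le> real (card (tables k b r)) * (\<Prod>z\<in>Z. p_sel r Q f z)"
      if "Z \<subseteq> keys k c" "good Z" for Z
      using card_tables_selecting_subset[OF inj D_keys \<open>Q \<subseteq> keys k c\<close> that(1) _ query] that(2)
      unfolding good_def .
    show "0 \<le> p_sel r Q f x" for x by (rule p_sel_nonneg[OF \<open>finite Q\<close>])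
  qed fact
  moreover have "good (?X Th) = lin_independent b (D ` ?X Th)" for Th
  proof -
    have "Q \<subseteq> ?X Th" using \<open>Q \<subseteq> keys k c\<close> query by (auto simp: selected_def)
    then show ?thesis by (simp add: good_def Un_absorb2)
  qed
  ultimately show ?thesis by simp
qed

lemma prob_pmf_of_set_product_le:
  assumes "finite A" "finite B" "A \<noteq> {}" "B \<noteq> {}"
    and slice_bound: "\<And>a. a \<in> A \<Longrightarrow> real (card {b \<in> B. P a b}) \<le> \<beta> * real (card B)"
  shows "measure_pmf.prob (pmf_of_set (A \<times> B)) {(a, b). P a b} \<le> \<beta>"
proof -
  have "(A \<times> B) \<inter> {(a, b). P a b} = Sigma A (\<lambda>a. {b \<in> B. P a b})" by auto
  then have "real (card ((A \<times> B) \<inter> {(a, b). P a b})) = (\<Sum>a\<in>A. real (card {b \<in> B. P a b}))"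
    using assms(1,2) by (simp flip: of_nat_sum)
  also have "\<dots> \<le> (\<Sum>a\<in>A. \<beta> * real (card B))" by (intro sum_mono slice_bound)
  finally have "real (card ((A \<times> B) \<inter> {(a, b). P a b})) \<le> \<beta> * real (card (A \<times> B))"
    by (simp add: card_cartesian_product ac_simps)
  moreover have "card (A \<times> B) > 0" using assms(1-4) by (simp add: card_gt_0_iff)
  ultimately show ?thesis
    using assms(1-4) by (simp add: measure_pmf_of_set divide_le_eq)
qed

theorem lemma1p6:
  fixes k c d r :: nat
    and Q :: "nat list set"
    and f :: "nat list \<Rightarrow> nat \<Rightarrow> (nat list \<Rightarrow> nat) \<Rightarrow> bool"
    and \<delta> :: real
  assumes "k \<ge> 8" and "c \<ge> 1" and "d \<ge> 1"
    and "Q \<subseteq> keys k c"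
    and "\<And>q v \<phi>. q \<in> Q \<Longrightarrow> f q v \<phi>"
    and "\<delta> > 0"
  shows "measure_pmf.prob (pmf_of_set (tornado_tables k c d \<times> tables k (c + d) r))
           {(Tt, Th). real (card (selected k c Q f (tornado Tt Th c d)))
                         \<ge> (1 + \<delta>) * mu_sel k c r Q f
                      \<and> lin_independent (c + d)
                          (derived_key Tt c d ` selected k c Q f (tornado Tt Th c d))}
         \<le> (exp \<delta> / (1 + \<delta>) powr (1 + \<delta>)) powr (mu_sel k c r Q f)"
proof (rule prob_pmf_of_set_product_le)
  show "finite (tornado_tables k c d)" "finite (tables k (c + d) r)"
    by (rule finite_tornado_tables finite_tables)+
  show "tornado_tables k c d \<noteq> {}" "tables k (c + d) r \<noteq> {}"
    using zero_in_tornado_tables zero_in_tables by blast+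
  fix Tt assume "Tt \<in> tornado_tables k c d"
  then have "derived_key Tt c d ` keys k c \<subseteq> keys k (c + d)"
    using derived_key_in_keys \<open>c \<ge> 1\<close> by blast
  moreover have "tornado Tt Th c d = (\<lambda>x. stab Th (derived_key Tt c d x))" for Th
    by (simp add: fun_eq_iff tornado_def)
  ultimately show "real (card {Th \<in> tables k (c + d) r.
                 real (card (selected k c Q f (tornado Tt Th c d))) \<ge> (1 + \<delta>) * mu_sel k c r Q f
               \<and> lin_independent (c + d) (derived_key Tt c d ` selected k c Q f (tornado Tt Th c d))})
        \<le> (exp \<delta> / (1 + \<delta>) powr (1 + \<delta>)) powr (mu_sel k c r Q f) * real (card (tables k (c + d) r))"
    using card_tables_chernoff[where f = f and r = r, OF inj_on_derived_key[OF \<open>c \<ge> 1\<close>] _ assms(4,5,6)]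
    by simp
qed

end
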